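(* There exists an $HS(3,K_4^{(3)}+e;16,6)$.
   Context: $K_4^{(3)}+e$ denotes the 3-uniform hypergraph with vertex set $\{1,2,3,4,5\}$ and edge set $\{\{1,2,3\},\{1,2,4\},\{1,3,4\},\{2,3,4\},\{3,4,5\}\}$. An $HS(3,K_4^{(3)}+e;v,s)$ is a collection of hypergraphs (blocks) on subsets of a $v$-set $V$, each isomorphic to $K_4^{(3)}+e$, whose edge sets partition the set of all 3-subsets of $V$ that are not contained in a fixed $s$-subset of $V$ (the hole). *)

theory Defs
  imports Main
begin

definition K4e_edges :: "nat set set" where
  "K4e_edges = {{1,2,3},{1,2,4},{1,3,4},{2,3,4},{3,4,5}}"

definition is_K4e_block :: "'a set \<Rightarrow> 'a set set \<Rightarrow> bool" where
  "is_K4e_block V E \<longleftrightarrow>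
     (\<exists>f. inj_on f {1..5::nat} \<and> f ` {1..5} \<subseteq> V \<and> E = (\<lambda>e. f ` e) ` K4e_edges)"

definition hole_triples :: "'a set \<Rightarrow> 'a set \<Rightarrow> 'a set set" where
  "hole_triples V S = {T. T \<subseteq> V \<and> card T = 3 \<and> \<not> T \<subseteq> S}"

text \<open>HS(3, K_4^(3)+e; v, s): a collection B of blocks (each given by its edge set)
  whose edge sets partition the 3-subsets of the v-set V not inside the s-subset S.\<close>
definition is_HS_K4e :: "'a set \<Rightarrow> 'a set \<Rightarrow> 'a set set set \<Rightarrow> nat \<Rightarrow> nat \<Rightarrow> bool" where
  "is_HS_K4e V S B v s \<longleftrightarrow>
     finite V \<and> card V = v \<and> S \<subseteq> V \<and> card S = s \<and>
     (\<forall>E\<in>B. is_K4e_block V E) \<and>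
     (\<forall>E1\<in>B. \<forall>E2\<in>B. E1 \<noteq> E2 \<longrightarrow> E1 \<inter> E2 = {}) \<and>
     \<Union>B = hole_triples V S"

end

theory Submission
  imports Defs "HOL-Library.Multiset" "HOL-Library.Nat_Bijection"
begin

text \<open>The design is an explicit list of 108 blocks. Their 540 edges are hole triples, and
  540 is exactly the number of 3-subsets of the 16-set not inside the 6-set, namely
  \<open>16 choose 3 - 6 choose 3\<close>. So the edges partition the hole triples as soon as they are
  pairwise distinct, and distinctness is certified by merge-sorting the binary codes
  \<open>set_encode\<close> of the edges into a strictly increasing list.\<close>

fun merge :: "nat list \<Rightarrow> nat list \<Rightarrow> nat list" where
  "merge [] ys = ys"
| "merge xs [] = xs"
| "merge (x # xs) (y # ys) =
     (if x \<le> y then x # merge xs (y # ys) else y # merge (x # xs) ys)"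

fun merge_sort :: "nat list \<Rightarrow> nat list" where
  "merge_sort xs = (if length xs \<le> 1 then xs else
     merge (merge_sort (take (length xs div 2) xs)) (merge_sort (drop (length xs div 2) xs)))"

declare merge_sort.simps [simp del]

lemma mset_merge [simp]: "mset (merge xs ys) = mset xs + mset ys"
  by (induction xs ys rule: merge.induct) auto

lemma mset_merge_sort [simp]: "mset (merge_sort xs) = mset xs"
proof (induction xs rule: merge_sort.induct)
  case (1 xs)
  then show ?case
    by (subst merge_sort.simps) (simp flip: mset_append)
qed

lemma strict_sorted_merge_sort_imp_distinct: "sorted_wrt (<) (merge_sort xs) \<Longrightarrow> distinct xs"
  by (metis mset_eq_imp_distinct_iff mset_merge_sort strict_sorted_iff)

definition k4e_edges :: "'a \<times> 'a \<times> 'a \<times> 'a \<times> 'a \<Rightarrow> 'a set list" where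
  "k4e_edges = (\<lambda>(a, b, c, d, e). [{a, b, c}, {a, b, d}, {a, c, d}, {b, c, d}, {c, d, e}])"

lemma is_K4e_block_k4e_edges:
  assumes "distinct [a, b, c, d, e]" and "{a, b, c, d, e} \<subseteq> V"
  shows "is_K4e_block V (set (k4e_edges (a, b, c, d, e)))"
proof -
  define f where "f i = (if i = 1 then a else if i = 2 then b else if i = 3 then c
                         else if i = 4 then d else e)" for i :: nat
  have five: "{1..5::nat} = {1, 2, 3, 4, 5}" by auto
  have "inj_on f {1..5}" "f ` {1..5} \<subseteq> V"
    using assms unfolding five by (auto simp: inj_on_def f_def)
  moreover have "set (k4e_edges (a, b, c, d, e)) = (\<lambda>e. f ` e) ` K4e_edges"
    by (simp add: k4e_edges_def K4e_edges_def f_def insert_commute)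
  ultimately show ?thesis
    unfolding is_K4e_block_def by blast
qed

lemma card_hole_triples:
  assumes "finite V" and "S \<subseteq> V"
  shows "card (hole_triples V S) = (card V choose 3) - (card S choose 3)"
proof -
  have "hole_triples V S = {T. T \<subseteq> V \<and> card T = 3} - {T. T \<subseteq> S \<and> card T = 3}"
    using assms(2) by (auto simp: hole_triples_def)
  moreover have "{T. T \<subseteq> S \<and> card T = 3} \<subseteq> {T. T \<subseteq> V \<and> card T = 3}"
    using assms(2) by auto
  moreover have "finite {T. T \<subseteq> S \<and> card T = 3}"
    using assms finite_subset[OF _ finite_Collect_subsets[of S]] by (auto simp: finite_subset)
  ultimately show ?thesis
    using assms by (simp add: card_Diff_subset n_subsets finite_subset)
qed

lemma is_HS_K4e_if_distinct_edges:
  fixes bs :: "('a \<times> 'a \<times> 'a \<times> 'a \<times> 'a) list"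
  assumes V: "finite V" "card V = v" and S: "S \<subseteq> V" "card S = s"
    and blocks: "\<forall>(a, b, c, d, e) \<in> set bs. distinct [a, b, c, d, e] \<and> {a, b, c, d, e} \<subseteq> V"
    and distinct: "distinct (concat (map k4e_edges bs))"
    and edges: "set (concat (map k4e_edges bs)) \<subseteq> hole_triples V S"
    and count: "length (concat (map k4e_edges bs)) = (v choose 3) - (s choose 3)"
  shows "is_HS_K4e V S (set (map (set \<circ> k4e_edges) bs)) v s"
proof -
  have "finite (hole_triples V S)"
    using V(1) by (simp add: hole_triples_def finite_subset)
  moreover have "card (set (concat (map k4e_edges bs))) = card (hole_triples V S)"
    using distinct_card[OF distinct] count card_hole_triples[OF V(1) S(1)] V S by simp
  ultimately have union: "set (concat (map k4e_edges bs)) = hole_triples V S"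
    using edges card_subset_eq by blast
  have "set E1 \<inter> set E2 = {}"
    if "E1 \<in> set (map k4e_edges bs)" "E2 \<in> set (map k4e_edges bs)" "set E1 \<noteq> set E2" for E1 E2
    using distinct that unfolding distinct_concat_iff by blast
  then have "\<forall>E1\<in>set (map (set \<circ> k4e_edges) bs). \<forall>E2\<in>set (map (set \<circ> k4e_edges) bs).
               E1 \<noteq> E2 \<longrightarrow> E1 \<inter> E2 = {}"
    by auto
  moreover have "\<forall>E\<in>set (map (set \<circ> k4e_edges) bs). is_K4e_block V E"
    using blocks is_K4e_block_k4e_edges by fastforce
  ultimately show ?thesis
    using V S union unfolding is_HS_K4e_def by auto
qed

definition design_16_6 :: "(nat \<times> nat \<times> nat \<times> nat \<times> nat) list" where
  "design_16_6 =
    [(8,14,0,1,6), (0,1,11,13,9), (11,12,0,3,14), (0,8,4,11,9), (10,13,0,4,9), (0,15,4,12,14),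
     (0,5,6,11,3), (5,12,0,7,4), (5,15,0,8,2), (5,9,0,13,3), (8,12,0,6,3), (0,10,6,9,2),
     (7,8,0,10,3), (2,6,1,14,10), (2,8,1,9,12), (3,6,1,15,13), (1,14,3,7,6), (8,13,1,3,12),
     (1,11,3,10,8), (1,4,11,15,13), (1,7,5,15,2), (8,10,1,6,7), (1,14,12,15,5), (3,12,2,8,6),
     (3,15,2,11,8), (4,11,2,6,3), (7,9,2,4,8), (2,6,5,10,11), (7,11,2,5,12), (2,8,14,15,11),
     (2,12,11,14,0), (4,8,3,15,5), (4,9,3,12,10), (5,13,3,11,9), (5,14,3,12,6), (3,14,6,13,11),
     (3,12,7,13,15), (3,8,11,14,1), (4,5,6,12,1), (10,15,4,5,8), (4,6,7,8,12), (4,11,12,13,1),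
     (5,15,6,14,7), (5,14,7,8,2), (9,12,5,8,11), (5,9,11,15,6), (6,11,7,12,4), (10,14,6,11,8),
     (9,15,7,8,13), (9,14,7,12,1), (7,13,11,14,9), (10,13,8,11,9), (8,12,13,14,2), (10,13,9,14,0),
     (9,15,1,0,7), (1,0,10,12,8), (10,13,1,2,15), (1,9,5,10,8), (11,12,1,5,8), (1,14,5,13,15),
     (1,4,7,10,2), (4,13,1,6,5), (4,14,1,9,3), (4,8,1,12,2), (9,13,1,7,2), (1,11,7,8,3),
     (6,9,1,11,2), (3,7,0,15,11), (3,9,0,8,13), (2,7,0,14,12), (0,15,2,6,7), (9,12,0,2,13),
     (0,10,2,11,9), (0,5,10,14,12), (0,6,4,14,3), (9,11,0,7,6), (0,15,13,14,4), (2,13,3,9,7),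
     (2,14,3,10,9), (5,10,3,7,2), (6,8,3,5,9), (3,7,4,11,10), (6,10,3,4,13), (3,9,15,14,10),
     (3,13,10,15,1), (5,9,2,14,4), (5,8,2,13,11), (4,12,2,10,8), (4,15,2,13,7), (2,15,7,12,10),
     (2,13,6,12,14), (2,9,10,15,0), (5,4,7,13,0), (11,14,5,4,9), (5,7,6,9,13), (5,10,13,12,0),
     (4,14,7,15,6), (4,15,6,9,3), (8,13,4,9,10), (4,8,10,14,7), (7,10,6,13,5), (11,15,7,10,9),
     (8,14,6,9,12), (8,15,6,13,0), (6,12,10,15,8), (11,12,9,10,8), (9,13,12,15,3), (11,12,8,15,1)]"

lemma design_16_6_blocks:
  "\<forall>(a, b, c, d, e) \<in> set design_16_6. distinct [a, b, c, d, e] \<and> {a, b, c, d, e} \<subseteq> {0..<16}"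
  by (simp add: design_16_6_def)

lemma design_16_6_edges:
  "set (concat (map k4e_edges design_16_6)) \<subseteq> hole_triples {0..<16} {0..<6}"
  by (simp add: design_16_6_def k4e_edges_def hole_triples_def)

lemma design_16_6_count:
  "length (concat (map k4e_edges design_16_6)) = (16 choose 3) - (6 choose 3)"
  by (simp add: design_16_6_def k4e_edges_def choose_reduce_nat)

lemma design_16_6_distinct_edges: "distinct (concat (map k4e_edges design_16_6))"
proof -
  have "distinct (map set_encode (concat (map k4e_edges design_16_6)))"
    by (rule strict_sorted_merge_sort_imp_distinct)
      (simp add: design_16_6_def k4e_edges_def
        merge_sort.simps[of "_ # _ # _"] merge_sort.simps[of "[_]"]
        del: sorted_wrt.simps add: sorted_wrt2 sorted_wrt1)
  then show ?thesis
    by (simp add: distinct_map)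
qed

theorem lemma3p8:
  shows "\<exists>(V::nat set) S B. is_HS_K4e V S B 16 6"
proof -
  have "is_HS_K4e {0..<16} {0..<6} (set (map (set \<circ> k4e_edges) design_16_6)) 16 6"
    by (rule is_HS_K4e_if_distinct_edges[OF _ _ _ _ design_16_6_blocks
          design_16_6_distinct_edges design_16_6_edges design_16_6_count]) auto
  then show ?thesis
    by blast
qed

end
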